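(* Let $s$ be a positive integer and $r$ a nonnegative integer, and let $\mathcal{E}_{s}^{(r)}$ be the set of marked Dyck paths from $(0,0)$ to $(2s,0)$ with exactly $r$ marked returns. Then \[ \sum_{D \in \mathcal{E}_{s}^{(r)}} q^{\mathrm{vmr}(D)} = q^{\binom{r+1}{2}}\frac{1-q^{r+1}}{1-q^s}\,\begin{bmatrix}2s\\ s+r+1\end{bmatrix}_q. \]
   Context: A Dyck path from $(0,0)$ to $(2s,0)$ is a sequence of lattice points $v_0=(0,0),v_1,\ldots,v_{2s}=(2s,0)$ with each step in $\{(1,1),(1,-1)\}$ that never goes below the $x$-axis. A point $v_i$ ($0<i<2s$) is a valley if $v_i-v_{i-1}=(1,-1)$ and $v_{i+1}-v_i=(1,1)$; a valley on the $x$-axis is a return. A marked Dyck path is a Dyck path together with a choice of which of its returns are marked (each return independently). For such $D$, $\mathrm{maj}(D)$ is the sum of the $x$-coordinates of all valleys of $D$, and $\mathrm{vmr}(D)=\mathrm{maj}(D)-\frac12\sum x_i$, the last sum over the $x$-coordinates $x_i$ of the marked returns. Notation: $(a;q)_n=(1-a)\cdots(1-aq^{n-1})$ and $\begin{bmatrix}n\\k\end{bmatrix}_q=\frac{(q;q)_n}{(q;q)_k(q;q)_{n-k}}$ for $n\ge k\ge0$, $0$ otherwise. *)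

theory Defs
  imports Main
begin

text \<open>A lattice path with steps (1,1) and (1,-1) is encoded as a list of booleans:
  True = up step (1,1), False = down step (1,-1). The point v_i is (i, height xs i).\<close>

definition height :: "bool list \<Rightarrow> nat \<Rightarrow> int" where
  "height xs i = int (length (filter (\<lambda>b. b) (take i xs)))
               - int (length (filter (\<lambda>b. \<not> b) (take i xs)))"

definition dyck_path :: "nat \<Rightarrow> bool list \<Rightarrow> bool" where
  "dyck_path s xs \<longleftrightarrow> length xs = 2 * s \<and> (\<forall>i \<le> 2 * s. height xs i \<ge> 0) \<and> height xs (2 * s) = 0"

text \<open>Valley at v_i (0 < i < length): step i (from v_(i-1) to v_i) is down, step i+1 is up.\<close>
definition valleys :: "bool list \<Rightarrow> nat set" where
  "valleys xs = {i. 0 < i \<and> i < length xs \<and> \<not> xs ! (i - 1) \<and> xs ! i}"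

definition returns :: "bool list \<Rightarrow> nat set" where
  "returns xs = {i \<in> valleys xs. height xs i = 0}"

definition maj :: "bool list \<Rightarrow> nat" where
  "maj xs = (\<Sum>i\<in>valleys xs. i)"

text \<open>Marked Dyck path = (path, set of x-coordinates of the marked returns).
  Returns have even x-coordinate, so the halved sum is exact.\<close>
definition vmr :: "bool list \<Rightarrow> nat set \<Rightarrow> nat" where
  "vmr xs M = maj xs - (\<Sum>i\<in>M. i) div 2"

definition marked_dyck :: "nat \<Rightarrow> nat \<Rightarrow> (bool list \<times> nat set) set" where
  "marked_dyck s r = {(xs, M). dyck_path s xs \<and> M \<subseteq> returns xs \<and> card M = r}"

definition qpoch :: "'a::field \<Rightarrow> 'a \<Rightarrow> nat \<Rightarrow> 'a" where
  "qpoch a q n = (\<Prod>j<n. 1 - a * q ^ j)"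

definition qbinom :: "'a::field \<Rightarrow> nat \<Rightarrow> nat \<Rightarrow> 'a" where
  "qbinom q n k = (if k \<le> n then qpoch q q n / (qpoch q q k * qpoch q q (n - k)) else 0)"

end

theory Submission
  imports Defs
begin

text \<open>Build the paths one step at a time and record, for each length \<open>n\<close>, end height \<open>h\<close> and
  last step \<open>d\<close>, the total weight \<open>q^vmr\<close> of the marked nonnegative prefixes. Appending a step
  creates a valley only when an up step follows a down step; a valley at \<open>x = n\<close> adds \<open>n\<close> to
  \<open>maj\<close>, or only \<open>n/2\<close> to \<open>vmr\<close> if it is a return that gets marked. So these weights obey a
  linear transfer recursion in \<open>n\<close>. Indexed by the numbers \<open>u\<close> of up and \<open>k\<close> of down steps, it
  is solved by explicit differences of Gaussian binomials \<open>[u+k-1, _]_q\<close>, which satisfy the same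
  recursion by the two q-Pascal rules. At the endpoint \<open>(2s, 0)\<close> the solution is
  \<open>q^(r+1 choose 2) ([2s-1, s+r]_q - q^(r+1) [2s-1, s+r+1]_q)\<close>, and comparing the two Pascal
  rules for \<open>[2s, s+r+1]_q\<close> turns it into the stated quotient.\<close>

section \<open>Gaussian binomials\<close>

text \<open>The Gaussian binomial \<open>[m, j]_q\<close> given by q-Pascal. The integer lower index makes it
  vanish outside \<open>0..m\<close>, and unlike \<open>qbinom\<close> it needs no division.\<close>
fun qbin :: "'a::comm_ring_1 \<Rightarrow> nat \<Rightarrow> int \<Rightarrow> 'a" where
  "qbin q 0 j = (if j = 0 then 1 else 0)"
| "qbin q (Suc m) j = (if j < 0 then 0 else qbin q m (j - 1) + q ^ nat j * qbin q m j)"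

lemma qbin_neg: "j < 0 \<Longrightarrow> qbin q m j = 0"
  by (cases m) auto

lemma qbin_above: "int m < j \<Longrightarrow> qbin q m j = 0"
  by (induction m arbitrary: j) auto

lemma qbin_nonzero_range: "qbin q m j \<noteq> 0 \<Longrightarrow> 0 \<le> j \<and> j \<le> int m"
  using qbin_neg qbin_above by (metis linorder_not_le)

lemma qbin_Suc: "qbin q (Suc m) j = qbin q m (j - 1) + q ^ nat j * qbin q m j"
  by (auto simp: qbin_neg)

declare qbin.simps(2) [simp del]

lemma qbin_0_right: "qbin q m 0 = 1"
  by (induction m) (auto simp: qbin_neg qbin_Suc)

lemma qbin_diag: "qbin q m (int m) = 1"
  by (induction m) (auto simp: qbin_above qbin_Suc)

lemma qbin_Suc_dual: "qbin q (Suc m) j = q ^ nat (int m + 1 - j) * qbin q m (j - 1) + qbin q m j"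
proof (induction m arbitrary: j)
  case 0
  then show ?case
    by (cases "j = 0"; cases "j = 1") (auto simp: qbin_neg qbin.simps)
next
  case (Suc m)
  have exponents: "q ^ nat j * (q ^ nat (int m + 1 - j) * qbin q m (j - 1))
                 = q ^ nat (int m + 2 - j) * (q ^ nat (j - 1) * qbin q m (j - 1))"
  proof (cases "qbin q m (j - 1) = 0")
    case False
    then have "0 \<le> j - 1" "j - 1 \<le> int m"
      using qbin_nonzero_range by blast+
    then have "nat j + nat (int m + 1 - j) = nat (int m + 2 - j) + nat (j - 1)"
      by linarith
    then show ?thesis
      by (simp add: mult.assoc [symmetric] power_add [symmetric])
  qed simp
  have "qbin q (Suc (Suc m)) j = qbin q (Suc m) (j - 1) + q ^ nat j * qbin q (Suc m) j"
    by (rule qbin_Suc)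
  also have "\<dots> = q ^ nat (int m + 2 - j) * qbin q m (j - 2) + qbin q m (j - 1)
      + q ^ nat j * (q ^ nat (int m + 1 - j) * qbin q m (j - 1)) + q ^ nat j * qbin q m j"
    using Suc.IH [of "j - 1"] Suc.IH [of j] by (simp add: algebra_simps)
  also have "\<dots> = q ^ nat (int m + 2 - j) * (qbin q m (j - 2) + q ^ nat (j - 1) * qbin q m (j - 1))
      + (qbin q m (j - 1) + q ^ nat j * qbin q m j)"
    unfolding exponents by (simp add: algebra_simps)
  also have "\<dots> = q ^ nat (int (Suc m) + 1 - j) * qbin q (Suc m) (j - 1) + qbin q (Suc m) j"
    using qbin_Suc [of q m "j - 1"] qbin_Suc [of q m j] by (simp add: algebra_simps)
  finally show ?case .
qed

lemma qbin_symmetric: "qbin q m j = qbin q m (int m - j)"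
proof (induction m arbitrary: j)
  case (Suc m)
  have "qbin q (Suc m) (int (Suc m) - j) = q ^ nat j * qbin q m (int m - j) + qbin q m (int m - (j - 1))"
    using qbin_Suc_dual [of q m "int (Suc m) - j"] by (simp add: algebra_simps)
  also have "\<dots> = qbin q (Suc m) j"
    using Suc.IH [of j] Suc.IH [of "j - 1"] by (simp add: qbin_Suc)
  finally show ?case ..
qed simp

lemma qpoch_Suc: "qpoch q q (Suc n) = qpoch q q n * (1 - q ^ Suc n)"
  by (simp add: qpoch_def)

lemma qbin_mult_qpoch: "qbin q (a + b) (int a) * qpoch q q a * qpoch q q b = qpoch q q (a + b)"
proof (induction "a + b" arbitrary: a b)
  case 0
  then show ?case by (simp add: qpoch_def)
next
  case (Suc n)
  show ?case
  proof (cases "a = 0 \<or> b = 0")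
    case True
    then show ?thesis
      using qbin_diag [of q a] by (auto simp: qbin_0_right qpoch_def)
  next
    case False
    then obtain a' b' where a: "a = Suc a'" and b: "b = Suc b'"
      by (meson not0_implies_Suc)
    have left: "qbin q n (int a') * qpoch q q a' * qpoch q q b = qpoch q q n"
      using Suc.hyps(1) [of a' b] Suc.hyps(2) a by simp
    have right: "qbin q n (int a) * qpoch q q a * qpoch q q b' = qpoch q q n"
      using Suc.hyps(1) [of a b'] Suc.hyps(2) b by simp
    have pascal: "qbin q (a + b) (int a) = qbin q n (int a') + q ^ a * qbin q n (int a)"
    proof -
      have "int a - 1 = int a'" using a by simp
      then show ?thesis using qbin_Suc [of q n "int a"] Suc.hyps(2) by simp
    qed
    have qa: "qpoch q q a = qpoch q q a' * (1 - q ^ a)" and qb: "qpoch q q b = qpoch q q b' * (1 - q ^ b)"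
      using a b by (simp_all add: qpoch_Suc)
    have "qbin q (a + b) (int a) * qpoch q q a * qpoch q q b
        = (qbin q n (int a') * qpoch q q a' * qpoch q q b) * (1 - q ^ a)
          + q ^ a * (qbin q n (int a) * qpoch q q a * qpoch q q b') * (1 - q ^ b)"
      unfolding pascal by (simp only: qa qb) (simp add: algebra_simps)
    also have "\<dots> = qpoch q q n * (1 - q ^ Suc n)"
      unfolding left right using Suc.hyps(2)
      by (simp add: algebra_simps power_add [symmetric])
    finally show ?thesis
      by (simp add: Suc.hyps(2) [symmetric] qpoch_Suc)
  qed
qed

lemma qpoch_nonzero:
  fixes q :: "'a::field"
  assumes "\<forall>j\<in>{1..N}. q ^ j \<noteq> 1" and "n \<le> N"
  shows "qpoch q q n \<noteq> 0"
  using assms unfolding qpoch_def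
  by (auto simp: prod_zero_iff simp flip: power_Suc)

lemma qbinom_eq_qbin:
  fixes q :: "'a::field"
  assumes "\<forall>j\<in>{1..n}. q ^ j \<noteq> 1" and "k \<le> n"
  shows "qbinom q n k = qbin q n (int k)"
proof -
  obtain l where n: "n = k + l"
    using assms(2) le_Suc_ex by blast
  have "qpoch q q k \<noteq> 0" "qpoch q q l \<noteq> 0"
    using qpoch_nonzero [OF assms(1)] n by simp_all
  then show ?thesis
    using qbin_mult_qpoch [of q k l] n by (simp add: qbinom_def field_simps)
qed

text \<open>Eliminate the entry of row \<open>Suc m\<close> between the two Pascal recurrences; for the central
  row \<open>Suc m = 2 (a + c)\<close> the dual recurrence has exponent \<open>a\<close>.\<close>
lemma qbin_centered_combination:
  assumes "Suc m = 2 * (a + c)"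
  shows "(1 - q ^ (a + c)) * (qbin q m (int (a + 2 * c) - 1) - q ^ c * qbin q m (int (a + 2 * c)))
       = (1 - q ^ c) * qbin q (Suc m) (int (a + 2 * c))"
proof -
  define A where "A = qbin q m (int (a + 2 * c) - 1)"
  define B where "B = qbin q m (int (a + 2 * c))"
  have pascal: "qbin q (Suc m) (int (a + 2 * c)) = A + q ^ a * (q ^ c) ^ 2 * B"
    using qbin_Suc [of q m "int (a + 2 * c)", unfolded nat_int] unfolding A_def B_def
    by (simp add: power_add power_mult mult_ac)
  have dual: "qbin q (Suc m) (int (a + 2 * c)) = q ^ a * A + B"
  proof -
    have "nat (int m + 1 - int (a + 2 * c)) = a"
      using assms by (simp add: nat_eq_iff)
    then show ?thesis
      using qbin_Suc_dual [of q m "int (a + 2 * c)"] unfolding A_def B_def by simp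
  qed
  have "(1 - q ^ (a + c)) * (A - q ^ c * B) - (1 - q ^ c) * (A + q ^ a * (q ^ c) ^ 2 * B)
      = q ^ c * ((A + q ^ a * (q ^ c) ^ 2 * B) - (q ^ a * A + B))"
    by (simp add: power_add power2_eq_square algebra_simps)
  then show ?thesis
    using pascal dual unfolding A_def B_def by simp
qed

section \<open>Extending a path by one step\<close>

definition nonneg_path :: "bool list \<Rightarrow> bool" where
  "nonneg_path xs \<longleftrightarrow> (\<forall>i\<le>length xs. height xs i \<ge> 0)"

lemma height_append: "i \<le> length ys \<Longrightarrow> height (ys @ zs) i = height ys i"
  by (simp add: height_def)

lemma height_snoc: "height (ys @ [b]) (Suc (length ys)) = height ys (length ys) + (if b then 1 else -1)"
  by (simp add: height_def)

lemma nonneg_path_snoc: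
  "nonneg_path (ys @ [b]) \<longleftrightarrow> nonneg_path ys \<and> height ys (length ys) + (if b then 1 else -1) \<ge> 0"
  unfolding nonneg_path_def using height_snoc [of ys b]
  by (auto simp: le_Suc_eq height_append)

lemma nonneg_path_last_down:
  assumes "nonneg_path xs" and "height xs (length xs) = 0" and "xs \<noteq> []"
  shows "\<not> last xs"
proof -
  obtain ys b where xs: "xs = ys @ [b]"
    using assms(3) by (metis append_butlast_last_id)
  have "height ys (length ys) \<ge> 0"
    using assms(1) unfolding xs nonneg_path_snoc by (simp add: nonneg_path_def)
  then show ?thesis
    using assms(2) height_snoc [of ys b] unfolding xs by auto
qed

lemma even_if_height_zero:
  assumes "i \<le> length xs" and "height xs i = 0"
  shows "even i"
proof -
  have "i = length (filter (\<lambda>b. b) (take i xs)) + length (filter (\<lambda>b. \<not> b) (take i xs))"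
    using sum_length_filter_compl [of "\<lambda>b. b" "take i xs"] assms(1) by simp
  then show ?thesis
    using assms(2) unfolding height_def by presburger
qed

lemma valleys_subset: "valleys xs \<subseteq> {..<length xs}"
  unfolding valleys_def by auto

lemma finite_valleys: "finite (valleys xs)"
  using valleys_subset finite_subset by blast

lemma returns_subset_valleys: "returns xs \<subseteq> valleys xs"
  unfolding returns_def by auto

lemma finite_returns: "finite (returns xs)"
  using returns_subset_valleys finite_valleys finite_subset by blast

lemma length_notin_returns: "length xs \<notin> returns xs"
  using returns_subset_valleys valleys_subset by blast

lemma valleys_snoc:
  "valleys (ys @ [b]) = valleys ys \<union> (if b \<and> ys \<noteq> [] \<and> \<not> last ys then {length ys} else {})"
proof -
  have last_step: "(ys @ [b]) ! (length ys - 1) = last ys" if "ys \<noteq> []"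
    using that by (simp add: nth_append last_conv_nth)
  have "i \<in> valleys (ys @ [b]) \<longleftrightarrow>
      i \<in> valleys ys \<union> (if b \<and> ys \<noteq> [] \<and> \<not> last ys then {length ys} else {})" for i
  proof (cases "i < length ys")
    case True
    then show ?thesis unfolding valleys_def by (auto simp: nth_append)
  next
    case False
    then show ?thesis
      unfolding valleys_def using last_step by (auto simp: less_Suc_eq)
  qed
  then show ?thesis by blast
qed

lemma returns_snoc:
  "returns (ys @ [b]) = returns ys \<union>
     (if b \<and> ys \<noteq> [] \<and> \<not> last ys \<and> height ys (length ys) = 0 then {length ys} else {})"
  using valleys_subset [of ys] unfolding returns_def valleys_snoc
  by (auto simp: height_append)

definition marked_weight :: "'a::comm_ring_1 \<Rightarrow> bool list \<Rightarrow> nat \<Rightarrow> 'a" where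
  "marked_weight q xs r = (\<Sum>M | M \<subseteq> returns xs \<and> card M = r. q ^ vmr xs M)"

lemma sum_returns_le_maj: "M \<subseteq> returns xs \<Longrightarrow> (\<Sum>i\<in>M. i) \<le> maj xs"
  unfolding maj_def using returns_subset_valleys finite_valleys
  by (meson order_trans sum_mono2 zero_le)

lemma maj_snoc_valley:
  assumes "ys \<noteq> []" and "\<not> last ys"
  shows "maj (ys @ [True]) = maj ys + length ys"
proof -
  have "valleys (ys @ [True]) = insert (length ys) (valleys ys)"
    using assms valleys_snoc by simp
  moreover have "length ys \<notin> valleys ys"
    using valleys_subset by blast
  ultimately show ?thesis
    unfolding maj_def using finite_valleys by simp
qed

lemma vmr_snoc_valley:
  assumes "ys \<noteq> []" and "\<not> last ys" and "M \<subseteq> returns ys"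
  shows "vmr (ys @ [True]) M = vmr ys M + length ys"
  using sum_returns_le_maj [OF assms(3)]
  unfolding vmr_def maj_snoc_valley [OF assms(1,2)] by linarith

text \<open>A marked return at \<open>x\<close> contributes \<open>x - x/2 = x/2\<close> instead of \<open>x\<close>.\<close>
lemma vmr_snoc_marked_return:
  assumes "ys \<noteq> []" and "\<not> last ys" and "M \<subseteq> returns ys" and "even (length ys)"
  shows "vmr (ys @ [True]) (insert (length ys) M) = vmr ys M + length ys div 2"
proof -
  have "finite M"
    using assms(3) finite_returns finite_subset by blast
  moreover have "length ys \<notin> M"
    using assms(3) length_notin_returns by blast
  ultimately have "(\<Sum>i\<in>insert (length ys) M. i) div 2 = length ys div 2 + (\<Sum>i\<in>M. i) div 2"
    using assms(4) by auto
  then show ?thesis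
    using sum_returns_le_maj [OF assms(3)] assms(4)
    unfolding vmr_def maj_snoc_valley [OF assms(1,2)] by auto
qed

lemma subsets_card_insert:
  assumes "finite R" and "n \<notin> R"
  shows "{M. M \<subseteq> insert n R \<and> card M = r}
       = {M. M \<subseteq> R \<and> card M = r} \<union> insert n ` {M. M \<subseteq> R \<and> Suc (card M) = r}"
proof (intro set_eqI iffI)
  fix M
  assume "M \<in> {M. M \<subseteq> insert n R \<and> card M = r}"
  then have M: "M \<subseteq> insert n R" "card M = r" "finite M"
    using assms(1) finite_subset by auto
  show "M \<in> {M. M \<subseteq> R \<and> card M = r} \<union> insert n ` {M. M \<subseteq> R \<and> Suc (card M) = r}"
  proof (cases "n \<in> M")
    case True
    then have "M = insert n (M - {n})" "M - {n} \<subseteq> R" "Suc (card (M - {n})) = r"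
      using M card_Suc_Diff1 [OF M(3) True] by auto
    then show ?thesis by blast
  qed (use M in blast)
next
  fix M
  assume "M \<in> {M. M \<subseteq> R \<and> card M = r} \<union> insert n ` {M. M \<subseteq> R \<and> Suc (card M) = r}"
  then show "M \<in> {M. M \<subseteq> insert n R \<and> card M = r}"
    using assms by (auto simp: card_insert_if finite_subset subset_iff)
qed

lemma marked_weight_snoc_no_valley:
  assumes "\<not> (b \<and> ys \<noteq> [] \<and> \<not> last ys)"
  shows "marked_weight q (ys @ [b]) r = marked_weight q ys r"
proof -
  have "valleys (ys @ [b]) = valleys ys" "returns (ys @ [b]) = returns ys"
    using assms by (auto simp: valleys_snoc returns_snoc)
  then show ?thesis
    unfolding marked_weight_def vmr_def maj_def by simp
qed

lemma marked_weight_snoc_valley: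
  assumes "ys \<noteq> []" and "\<not> last ys"
  shows "marked_weight q (ys @ [True]) r = q ^ length ys * marked_weight q ys r
      + (if height ys (length ys) = 0 \<and> r > 0 then q ^ (length ys div 2) * marked_weight q ys (r - 1) else 0)"
proof -
  let ?n = "length ys"
  let ?A = "{M. M \<subseteq> returns ys \<and> card M = r}"
  let ?B = "{M. M \<subseteq> returns ys \<and> Suc (card M) = r}"
  have unmarked: "(\<Sum>M\<in>?A. q ^ vmr (ys @ [True]) M) = q ^ ?n * marked_weight q ys r"
    unfolding marked_weight_def sum_distrib_left
    by (rule sum.cong) (auto simp: vmr_snoc_valley [OF assms] power_add mult.commute)
  show ?thesis
  proof (cases "height ys ?n = 0")
    case False
    then have "returns (ys @ [True]) = returns ys"
      by (simp add: returns_snoc)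
    then show ?thesis
      using False unmarked unfolding marked_weight_def by simp
  next
    case True
    have even: "even ?n"
      using even_if_height_zero [of ?n ys] True by simp
    have "returns (ys @ [True]) = insert ?n (returns ys)"
      using assms True by (simp add: returns_snoc)
    then have split: "{M. M \<subseteq> returns (ys @ [True]) \<and> card M = r} = ?A \<union> insert ?n ` ?B"
      using subsets_card_insert [OF finite_returns length_notin_returns] by simp
    have fin: "finite ?A" "finite ?B"
      by (auto intro: finite_subset [of _ "Pow (returns ys)"] simp: finite_returns)
    have inj: "inj_on (insert ?n) ?B"
      using length_notin_returns [of ys] unfolding inj_on_def
      by (metis (no_types, lifting) insert_ident mem_Collect_eq subsetD)
    have "(\<Sum>M\<in>insert ?n ` ?B. q ^ vmr (ys @ [True]) M) = (\<Sum>M\<in>?B. q ^ (?n div 2) * q ^ vmr ys M)"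
      by (simp add: sum.reindex [OF inj] vmr_snoc_marked_return [OF assms _ even] power_add mult.commute)
    also have "\<dots> = (if r > 0 then q ^ (?n div 2) * marked_weight q ys (r - 1) else 0)"
      by (cases r) (simp_all add: marked_weight_def sum_distrib_left)
    finally have marked: "(\<Sum>M\<in>insert ?n ` ?B. q ^ vmr (ys @ [True]) M)
        = (if r > 0 then q ^ (?n div 2) * marked_weight q ys (r - 1) else 0)" .
    have "marked_weight q (ys @ [True]) r
        = (\<Sum>M\<in>?A. q ^ vmr (ys @ [True]) M) + (\<Sum>M\<in>insert ?n ` ?B. q ^ vmr (ys @ [True]) M)"
      unfolding marked_weight_def split
      by (rule sum.union_disjoint) (use fin length_notin_returns [of ys] in auto)
    then show ?thesis
      using unmarked marked True by simp
  qed
qed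

section \<open>Transfer recursion for prefix weights\<close>

lemma finite_bool_lists_length: "finite {xs :: bool list. length xs = n}"
  using finite_lists_length_eq [of "UNIV :: bool set" n] by simp

lemma sum_bool_lists_length_Suc:
  "(\<Sum>xs | length xs = Suc n. f xs) = (\<Sum>ys | length ys = n. f (ys @ [True]) + f (ys @ [False]))"
proof -
  let ?L = "{ys::bool list. length ys = n}"
  have lists: "{xs::bool list. length xs = Suc n} = (\<lambda>ys. ys @ [True]) ` ?L \<union> (\<lambda>ys. ys @ [False]) ` ?L"
  proof (intro set_eqI iffI)
    fix xs :: "bool list"
    assume xs: "xs \<in> {xs. length xs = Suc n}"
    then obtain ys b where "xs = ys @ [b]" "length ys = n"
      by (auto simp: length_Suc_conv_rev)
    then show "xs \<in> (\<lambda>ys. ys @ [True]) ` ?L \<union> (\<lambda>ys. ys @ [False]) ` ?L"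
      by (cases b) auto
  qed auto
  have "inj_on (\<lambda>ys. ys @ [b]) ?L" for b :: bool
    by (auto simp: inj_on_def)
  then show ?thesis
    unfolding lists
    by (subst sum.union_disjoint) (auto simp: finite_bool_lists_length sum.reindex sum.distrib)
qed

definition prefix_weight :: "'a::comm_ring_1 \<Rightarrow> nat \<Rightarrow> int \<Rightarrow> bool \<Rightarrow> nat \<Rightarrow> 'a" where
  "prefix_weight q n h d r = (\<Sum>xs | length xs = n.
     if nonneg_path xs \<and> height xs n = h \<and> xs \<noteq> [] \<and> last xs = d then marked_weight q xs r else 0)"

lemma prefix_weight_Suc_down:
  assumes "n > 0"
  shows "prefix_weight q (Suc n) h False r
       = (if h \<ge> 0 then prefix_weight q n (h + 1) True r + prefix_weight q n (h + 1) False r else 0)"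
proof -
  let ?term = "\<lambda>xs m h d r. if nonneg_path xs \<and> height xs m = h \<and> xs \<noteq> [] \<and> last xs = d
                               then marked_weight q xs r else 0"
  have "?term (ys @ [True]) (Suc n) h False r + ?term (ys @ [False]) (Suc n) h False r
      = (if h \<ge> 0 then ?term ys n (h + 1) True r + ?term ys n (h + 1) False r else 0)"
    if "length ys = n" for ys
    using that assms height_snoc [of ys False] nonneg_path_snoc [of ys False]
      marked_weight_snoc_no_valley [of False ys q r]
    by (cases "last ys") auto
  then have "prefix_weight q (Suc n) h False r
      = (\<Sum>ys | length ys = n. if h \<ge> 0 then ?term ys n (h + 1) True r + ?term ys n (h + 1) False r else 0)"
    unfolding prefix_weight_def sum_bool_lists_length_Suc by (intro sum.cong) auto
  then show ?thesis
    unfolding prefix_weight_def by (simp add: sum.distrib)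
qed

lemma prefix_weight_Suc_up:
  assumes "n > 0"
  shows "prefix_weight q (Suc n) h True r
       = prefix_weight q n (h - 1) True r + q ^ n * prefix_weight q n (h - 1) False r
         + (if h = 1 \<and> r > 0 then q ^ (n div 2) * prefix_weight q n 0 False (r - 1) else 0)"
proof -
  let ?term = "\<lambda>xs m h d r. if nonneg_path xs \<and> height xs m = h \<and> xs \<noteq> [] \<and> last xs = d
                               then marked_weight q xs r else 0"
  have "?term (ys @ [True]) (Suc n) h True r + ?term (ys @ [False]) (Suc n) h True r
      = ?term ys n (h - 1) True r + q ^ n * ?term ys n (h - 1) False r
        + (if h = 1 \<and> r > 0 then q ^ (n div 2) * ?term ys n 0 False (r - 1) else 0)"
    if "length ys = n" for ys
    using that assms height_snoc [of ys True] nonneg_path_snoc [of ys True]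
      marked_weight_snoc_no_valley [of True ys q r] marked_weight_snoc_valley [of ys q r]
    unfolding nonneg_path_def by (cases "last ys") auto
  then have "prefix_weight q (Suc n) h True r
      = (\<Sum>ys | length ys = n. ?term ys n (h - 1) True r + q ^ n * ?term ys n (h - 1) False r
           + (if h = 1 \<and> r > 0 then q ^ (n div 2) * ?term ys n 0 False (r - 1) else 0))"
    unfolding prefix_weight_def sum_bool_lists_length_Suc by (intro sum.cong) auto
  then show ?thesis
    unfolding prefix_weight_def
    by (cases "h = 1 \<and> r > 0") (auto simp: sum.distrib sum_distrib_left)
qed

lemma all_up_if_height_eq_length:
  assumes "height xs (length xs) = int (length xs)"
  shows "\<forall>x\<in>set xs. x"
proof -
  have "length xs = length (filter (\<lambda>b. b) xs) + length (filter (\<lambda>b. \<not> b) xs)"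
    using sum_length_filter_compl [of "\<lambda>b. b" xs] by simp
  then have "filter (\<lambda>b. \<not> b) xs = []"
    using assms unfolding height_def by simp
  then show ?thesis
    by (simp add: filter_empty_conv)
qed

lemma prefix_weight_top_down: "prefix_weight q n (int n) False r = 0"
proof -
  have "last xs" if "length xs = n" "height xs n = int n" "xs \<noteq> []" for xs :: "bool list"
    using that all_up_if_height_eq_length [of xs] last_in_set by auto
  then show ?thesis
    unfolding prefix_weight_def by (intro sum.neutral) auto
qed

lemma prefix_weight_zero_up: "prefix_weight q n 0 True r = 0"
  unfolding prefix_weight_def
  by (rule sum.neutral) (auto dest: nonneg_path_last_down)

lemma prefix_weight_one_up: "prefix_weight q 1 1 True r = (if r = 0 then 1 else 0)"
proof -
  have lists: "{xs :: bool list. length xs = 1} = {[True], [False]}"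
    by (auto simp: length_Suc_conv)
  have "valleys [True] = {}"
    unfolding valleys_def by auto
  moreover have "{M :: nat set. M = {} \<and> card M = r} = (if r = 0 then {{}} else {})"
    by auto
  ultimately have "marked_weight q [True] r = (if r = 0 then 1 else 0)"
    unfolding marked_weight_def returns_def vmr_def maj_def by simp
  moreover have "nonneg_path [True]"
    unfolding nonneg_path_def height_def by (auto simp: le_Suc_eq)
  ultimately show ?thesis
    unfolding prefix_weight_def lists by (simp add: height_def)
qed

section \<open>Closed forms\<close>

lemma Suc_choose_two: "Suc n choose 2 = (n choose 2) + n"
  by (simp add: numeral_2_eq_2)

text \<open>The weights of prefixes with \<open>u\<close> up and \<open>k\<close> down steps ending with a down step,
  resp. an up step, see \<open>prefix_weight_closed_form\<close>.\<close>
definition down_form :: "'a::comm_ring_1 \<Rightarrow> nat \<Rightarrow> nat \<Rightarrow> nat \<Rightarrow> 'a" where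
  "down_form q u k r = q ^ (Suc r choose 2) * qbin q (u + k - 1) (int k - 1 - int r)
                     - q ^ (Suc (Suc r) choose 2) * qbin q (u + k - 1) (int k - 2 - int r)"

definition up_form :: "'a::comm_ring_1 \<Rightarrow> nat \<Rightarrow> nat \<Rightarrow> nat \<Rightarrow> 'a" where
  "up_form q u k r = q ^ (k + (r choose 2)) * qbin q (u + k - 1) (int k - int r)
                   - q ^ (k + (Suc r choose 2)) * qbin q (u + k - 1) (int k - int r - 1)"

lemma qbin_power_shift:
  "qbin q m (int a - int b) * q ^ ((Suc b choose 2) + nat (int a - int b))
 = qbin q m (int a - int b) * q ^ (a + (b choose 2))"
proof (cases "qbin q m (int a - int b) = 0")
  case False
  then have "b \<le> a"
    using qbin_nonzero_range by fastforce
  then show ?thesis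
    by (simp add: Suc_choose_two nat_diff_distrib add.commute)
qed simp

lemma down_form_no_downs: "down_form q u 0 r = 0"
  by (simp add: down_form_def qbin_neg)

lemma up_form_one_up: "up_form q 1 0 r = (if r = 0 then 1 else 0)"
  by (simp add: up_form_def qbin_neg numeral_2_eq_2)

lemma down_form_Suc_down:
  assumes "k < u"
  shows "down_form q u (Suc k) r = up_form q u k r + down_form q u k r"
proof -
  define m where "m = u + k - 1"
  have m: "u + k - 1 = m" "u + Suc k - 1 = Suc m"
    using assms unfolding m_def by auto
  have shift_r: "q ^ (Suc r choose 2) * (q ^ nat (int k - int r) * qbin q m (int k - int r))
      = q ^ (k + (r choose 2)) * qbin q m (int k - int r)"
    using qbin_power_shift [of q m k r] by (simp add: power_add algebra_simps)
  have shift_Suc_r: "q ^ (Suc (Suc r) choose 2) * (q ^ nat (int k - int (Suc r)) * qbin q m (int k - int (Suc r)))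
      = q ^ (k + (Suc r choose 2)) * qbin q m (int k - int (Suc r))"
    using qbin_power_shift [of q m k "Suc r"] by (simp add: power_add algebra_simps)
  have "down_form q u (Suc k) r
      = q ^ (Suc r choose 2) * (qbin q m (int k - int r - 1) + q ^ nat (int k - int r) * qbin q m (int k - int r))
      - q ^ (Suc (Suc r) choose 2) * (qbin q m (int k - int (Suc r) - 1)
          + q ^ nat (int k - int (Suc r)) * qbin q m (int k - int (Suc r)))"
    unfolding down_form_def m qbin_Suc by (simp add: algebra_simps)
  also have "\<dots> = (q ^ (Suc r choose 2) * (q ^ nat (int k - int r) * qbin q m (int k - int r))
        - q ^ (Suc (Suc r) choose 2) * (q ^ nat (int k - int (Suc r)) * qbin q m (int k - int (Suc r))))
      + (q ^ (Suc r choose 2) * qbin q m (int k - int r - 1)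
        - q ^ (Suc (Suc r) choose 2) * qbin q m (int k - int (Suc r) - 1))"
    by (simp add: algebra_simps)
  also have "\<dots> = up_form q u k r + down_form q u k r"
    unfolding shift_r shift_Suc_r up_form_def down_form_def m by (simp add: algebra_simps)
  finally show ?thesis .
qed

lemma up_form_Suc_up:
  assumes "k \<le> u" and "0 < u + k"
  shows "up_form q (Suc u) k r = up_form q u k r + q ^ (u + k) * down_form q u k r"
proof -
  define m where "m = u + k - 1"
  have m: "u + k - 1 = m" "Suc u + k - 1 = Suc m" "u + k = Suc m"
    using assms unfolding m_def by auto
  have exps: "nat (int m + 1 - (int k - int r)) = u + r" "nat (int m + 1 - (int k - int r - 1)) = u + r + 1"
    using m by auto
  have "up_form q (Suc u) k r
      = q ^ (k + (r choose 2)) * (q ^ (u + r) * qbin q m (int k - int r - 1) + qbin q m (int k - int r))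
      - q ^ (k + (Suc r choose 2)) * (q ^ (u + r + 1) * qbin q m (int k - int r - 1 - 1) + qbin q m (int k - int r - 1))"
    unfolding up_form_def m qbin_Suc_dual exps ..
  also have "\<dots> = (q ^ (k + (r choose 2)) * qbin q m (int k - int r) - q ^ (k + (Suc r choose 2)) * qbin q m (int k - int r - 1))
      + (q ^ (k + (r choose 2) + (u + r)) * qbin q m (int k - int r - 1)
         - q ^ (k + (Suc r choose 2) + (u + r + 1)) * qbin q m (int k - int r - 1 - 1))"
    by (simp add: power_add algebra_simps)
  also have "\<dots> = up_form q u k r + q ^ (u + k) * down_form q u k r"
  proof -
    have "k + (r choose 2) + (u + r) = (u + k) + (Suc r choose 2)"
      "k + (Suc r choose 2) + (u + r + 1) = (u + k) + (Suc (Suc r) choose 2)"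
      by (simp_all add: Suc_choose_two)
    moreover have "int k - int r - 1 - 1 = int k - 2 - int r" "int k - int r - 1 = int k - 1 - int r"
      by simp_all
    ultimately show ?thesis
      unfolding up_form_def down_form_def m(1) by (simp only: power_add) (simp add: algebra_simps)
  qed
  finally show ?thesis .
qed

lemma up_form_diagonal:
  assumes "0 < u"
  shows "up_form q u u r = (if r > 0 then q ^ u * down_form q u u (r - 1) else 0)"
proof (cases r)
  case 0
  have "qbin q (u + u - 1) (int u - 1) = qbin q (u + u - 1) (int u)"
    using qbin_symmetric [of q "u + u - 1" "int u - 1"] assms by (simp add: of_nat_diff)
  then show ?thesis
    using 0 by (simp add: up_form_def numeral_2_eq_2)
next
  case (Suc r')
  have "int u - 1 - int (r - 1) = int u - int r" "int u - 2 - int (r - 1) = int u - int r - 1"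
    using Suc by simp_all
  then show ?thesis
    using Suc by (simp add: up_form_def down_form_def power_add algebra_simps)
qed

lemma prefix_weight_down_step:
  assumes "0 < n" and "k < u"
    and "prefix_weight q n (int u - int k) True r = up_form q u k r"
    and "prefix_weight q n (int u - int k) False r = down_form q u k r"
  shows "prefix_weight q (Suc n) (int u - int (Suc k)) False r = down_form q u (Suc k) r"
proof -
  have "int u - int (Suc k) \<ge> 0" "int u - int (Suc k) + 1 = int u - int k"
    using assms(2) by auto
  then have "prefix_weight q (Suc n) (int u - int (Suc k)) False r = up_form q u k r + down_form q u k r"
    using prefix_weight_Suc_down [OF assms(1), of q "int u - int (Suc k)" r] assms(3,4) by simp
  then show ?thesis
    using down_form_Suc_down [OF assms(2), of q r] by simp
qed

lemma prefix_weight_up_step: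
  assumes "0 < n" and "u + k = n" and "k \<le> u"
    and down: "\<And>r. prefix_weight q n (int u - int k) False r = down_form q u k r"
    and up: "k < u \<Longrightarrow> prefix_weight q n (int u - int k) True r = up_form q u k r"
  shows "prefix_weight q (Suc n) (int (Suc u) - int k) True r = up_form q (Suc u) k r"
proof -
  have step: "prefix_weight q (Suc n) (int (Suc u) - int k) True r
      = prefix_weight q n (int u - int k) True r + q ^ n * down_form q u k r
        + (if k = u \<and> r > 0 then q ^ (n div 2) * prefix_weight q n 0 False (r - 1) else 0)"
    using prefix_weight_Suc_up [OF assms(1), of q "int (Suc u) - int k" r] down [of r] by simp
  show ?thesis
  proof (cases "k < u")
    case True
    then show ?thesis
      using step up up_form_Suc_up [OF assms(3), of q r] assms(1,2) by simp
  next
    case False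
    then have "k = u" "0 < u" "n div 2 = u"
      using assms(1-3) by auto
    then show ?thesis
      using step down [of "r - 1"] prefix_weight_zero_up [of q n r] up_form_diagonal [of u q r]
        up_form_Suc_up [of u u q r] assms(2) by auto
  qed
qed

lemma prefix_weight_closed_form:
  assumes "u + k = n" and "0 < n" and "k \<le> u"
  shows "prefix_weight q n (int u - int k) False r = down_form q u k r
       \<and> (k < u \<longrightarrow> prefix_weight q n (int u - int k) True r = up_form q u k r)"
  using assms
proof (induction n arbitrary: u k r)
  case (Suc n)
  show ?case
  proof (cases "n = 0")
    case True
    then have "u = 1" "k = 0" "Suc n = 1"
      using Suc.prems by auto
    then show ?thesis
      using prefix_weight_top_down [of q 1 r] prefix_weight_one_up [of q r] up_form_one_up [of q r]
      by (simp only: down_form_no_downs) simp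
  next
    case False
    then have IH: "\<And>u k r. u + k = n \<Longrightarrow> k \<le> u \<Longrightarrow>
        prefix_weight q n (int u - int k) False r = down_form q u k r
        \<and> (k < u \<longrightarrow> prefix_weight q n (int u - int k) True r = up_form q u k r)"
      using Suc.IH by blast
    have "prefix_weight q (Suc n) (int u - int k) False r = down_form q u k r"
    proof (cases k)
      case 0
      then show ?thesis
        using Suc.prems(1) prefix_weight_top_down [of q "Suc n" r] by (simp add: down_form_no_downs)
    next
      case (Suc k')
      then show ?thesis
        using prefix_weight_down_step [of n k' u q r] IH [of u k'] False Suc.prems by simp
    qed
    moreover have "prefix_weight q (Suc n) (int u - int k) True r = up_form q u k r" if "k < u"
    proof -
      obtain u' where "u = Suc u'" "k \<le> u'"
        using \<open>k < u\<close> by (cases u) auto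
      then show ?thesis
        using prefix_weight_up_step [of n u' k q r] IH [of u' k] False Suc.prems by simp
    qed
    ultimately show ?thesis by blast
  qed
qed simp

lemma down_form_diagonal:
  fixes q :: "'a::field"
  assumes "\<forall>j\<in>{1..2 * s}. q ^ j \<noteq> 1" and "0 < s"
  shows "down_form q s s r = q ^ ((r + 1) choose 2) * ((1 - q ^ (r + 1)) / (1 - q ^ s)) * qbinom q (2 * s) (s + r + 1)"
proof (cases "r < s")
  case False
  then show ?thesis
    by (simp add: down_form_def qbinom_def qbin_neg)
next
  case True
  define a where "a = s - 1 - r"
  define m where "m = 2 * s - 1"
  have s: "s = a + (r + 1)" and m: "Suc m = 2 * (a + (r + 1))" "s + s - 1 = m"
    using True assms(2) unfolding a_def m_def by auto
  define X where "X = qbin q m (int (a + 2 * (r + 1)) - 1) - q ^ (r + 1) * qbin q m (int (a + 2 * (r + 1)))"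
  have "int m - (int s - 1 - int r) = int (a + 2 * (r + 1)) - 1"
    "int m - (int s - 2 - int r) = int (a + 2 * (r + 1))"
    using m s by simp_all
  then have "qbin q m (int s - 1 - int r) = qbin q m (int (a + 2 * (r + 1)) - 1)"
    "qbin q m (int s - 2 - int r) = qbin q m (int (a + 2 * (r + 1)))"
    using qbin_symmetric [of q m "int s - 1 - int r"] qbin_symmetric [of q m "int s - 2 - int r"]
    by metis+
  then have "down_form q s s r = q ^ ((r + 1) choose 2) * X"
    unfolding X_def down_form_def m(2) by (simp add: Suc_choose_two power_add algebra_simps)
  moreover have "(1 - q ^ s) * X = (1 - q ^ (r + 1)) * qbinom q (2 * s) (s + r + 1)"
    unfolding X_def
    using qbin_centered_combination [OF m(1), of q] qbinom_eq_qbin [OF assms(1), of "s + r + 1"] True m s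
    by (simp add: ac_simps)
  moreover have "1 - q ^ s \<noteq> 0"
    using assms by auto
  ultimately show ?thesis
    by (simp add: eq_divide_eq mult.commute mult.left_commute)
qed

lemma dyck_path_iff:
  assumes "0 < s"
  shows "dyck_path s xs \<longleftrightarrow> length xs = 2 * s
           \<and> nonneg_path xs \<and> height xs (2 * s) = 0 \<and> xs \<noteq> [] \<and> last xs = False"
proof -
  have "xs \<noteq> [] \<and> \<not> last xs" if "length xs = 2 * s" "nonneg_path xs" "height xs (2 * s) = 0"
  proof -
    have "xs \<noteq> []"
      using that(1) assms by auto
    then show ?thesis
      using that nonneg_path_last_down [of xs] by simp
  qed
  then show ?thesis
    using assms unfolding dyck_path_def nonneg_path_def by auto
qed

lemma sum_marked_dyck_eq_prefix_weight:
  assumes "0 < s"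
  shows "(\<Sum>(xs, M)\<in>marked_dyck s r. q ^ vmr xs M) = prefix_weight q (2 * s) 0 False r"
proof -
  let ?D = "{xs. dyck_path s xs}"
  have "finite ?D"
    by (rule finite_subset [OF _ finite_bool_lists_length [of "2 * s"]]) (auto simp: dyck_path_def)
  moreover have "marked_dyck s r = Sigma ?D (\<lambda>xs. {M. M \<subseteq> returns xs \<and> card M = r})"
    unfolding marked_dyck_def by auto
  ultimately have "(\<Sum>(xs, M)\<in>marked_dyck s r. q ^ vmr xs M) = (\<Sum>xs\<in>?D. marked_weight q xs r)"
    unfolding marked_weight_def
    by (auto intro!: sum.Sigma [symmetric] intro: finite_subset [of _ "Pow (returns _)"] simp: finite_returns)
  also have "?D = {xs \<in> {xs. length xs = 2 * s}.
      nonneg_path xs \<and> height xs (2 * s) = 0 \<and> xs \<noteq> [] \<and> last xs = False}"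
    using dyck_path_iff [OF assms] by auto
  also have "(\<Sum>xs\<in>\<dots>. marked_weight q xs r) = prefix_weight q (2 * s) 0 False r"
    unfolding prefix_weight_def by (rule sum.inter_filter [OF finite_bool_lists_length])
  finally show ?thesis .
qed

theorem corollary2p4:
  fixes q :: "'a::field" and s r :: nat
  assumes "s > 0"
    and "\<forall>j\<in>{1..2 * s}. q ^ j \<noteq> 1"
  shows "(\<Sum>(xs, M)\<in>marked_dyck s r. q ^ vmr xs M)
         = q ^ ((r + 1) choose 2) * ((1 - q ^ (r + 1)) / (1 - q ^ s)) * qbinom q (2 * s) (s + r + 1)"
proof -
  have "(\<Sum>(xs, M)\<in>marked_dyck s r. q ^ vmr xs M) = prefix_weight q (2 * s) (int s - int s) False r"
    using sum_marked_dyck_eq_prefix_weight [OF assms(1)] by simp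
  also have "\<dots> = down_form q s s r"
    using prefix_weight_closed_form [of s s "2 * s"] assms(1) by simp
  also have "\<dots> = q ^ ((r + 1) choose 2) * ((1 - q ^ (r + 1)) / (1 - q ^ s)) * qbinom q (2 * s) (s + r + 1)"
    using down_form_diagonal [OF assms(2,1)] .
  finally show ?thesis .
qed

end
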